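(* Let $F$ be WORDER or WMAJORITY. During a run of (1+1) GP-single on MO-$F$, let $s$ be the number of leaves of the current tree and $k$ the number of expressed variables of the current tree. Then $F$ of the current tree never decreases and the quantity $s-k$ never increases from one iteration to the next. In particular, once the current tree is non-redundant, it stays non-redundant for the rest of the run.
   Context: Fix an integer $n\ge 1$ and real weights $w_1\ge w_2\ge\dots\ge w_n>0$. The terminal set is $T=\{x_1,\bar x_1,\dots,x_n,\bar x_n\}$ ($\bar x_i$ is the complement of $x_i$; $x_i$ is called positive). A syntax tree is either the empty tree or a rooted ordered binary tree whose inner nodes are all labelled by the binary function $J$ (join, exactly two ordered children) and whose leaves are labelled by elements of $T$. The complexity $C(X)$ is the number of nodes of $X$ (0 for the empty tree). The leaf list $l$ of $X$ is the sequence of leaf labels in an inorder traversal. WORDER: build a list $S$ by scanning $l$ from front to rear and appending a literal only if neither it nor its complement is already in $S$; WORDER$(X)=\sum_{i:\,x_i\in S} w_i$; here $x_i$ is expressed iff $x_i\in S$. WMAJORITY: WMAJORITY$(X)=\sum w_i$ over all $i$ such that $x_i$ occurs in $l$ at least once and at least as often as $\bar x_i$; these $x_i$ are the expressed variables. A tree is non-redundant if it is empty or if, with $k$ its number of expressed variables, its complexity is $2k-1$. MO-$F(X)=(F(X),C(X))$, $F$ maximized and $C$ minimized. Mutation (HVL-Prime applied $k$ times): each application chooses uniformly at random one of three operations. Substitute: replace a uniformly random leaf by a uniformly random $u\in T$. Insert: choose a uniformly random node $v$ and uniformly random $u\in T$, replace $v$ by a $J$-node with children $u$ and $v$ in uniformly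 random order (inserting into the empty tree yields the single leaf $u$). Delete: choose a uniformly random leaf $v$ with parent $p$ and sibling $u$, replace $p$ by $u$ (deleting $p$ and $v$; deleting the only leaf of a one-leaf tree yields the empty tree). Single-operation mutation uses $k=1$. (1+1) GP-single on MO-$F$: start with an initial tree $X$; in each iteration let $Y$ be $X$ mutated with $k=1$, and set $X:=Y$ iff $F(Y)>F(X)$, or $F(Y)=F(X)$ and $C(Y)\le C(X)$. *)

theory Defs
  imports Complex_Main
begin

text \<open>Variables are indexed by 1..n. Pos i is x_i, Neg i is its complement.\<close>
datatype lit = Pos nat | Neg nat

fun var :: "lit \<Rightarrow> nat" where
  "var (Pos i) = i" | "var (Neg i) = i"

fun compl :: "lit \<Rightarrow> lit" where
  "compl (Pos i) = Neg i" | "compl (Neg i) = Pos i"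

definition terminals :: "nat \<Rightarrow> lit set" where
  "terminals n = {Pos i | i. i \<in> {1..n}} \<union> {Neg i | i. i \<in> {1..n}}"

text \<open>Non-empty trees: leaves labelled by literals, inner nodes are J with two ordered children.
  A syntax tree is a btree option, None being the empty tree.\<close>
datatype btree = Leaf lit | Join btree btree

type_synonym tree = "btree option"

fun leaves :: "btree \<Rightarrow> lit list" where
  "leaves (Leaf a) = [a]"
| "leaves (Join l r) = leaves l @ leaves r"

definition leaf_list :: "tree \<Rightarrow> lit list" where
  "leaf_list X = (case X of None \<Rightarrow> [] | Some t \<Rightarrow> leaves t)"

fun bsize :: "btree \<Rightarrow> nat" where
  "bsize (Leaf a) = 1"
| "bsize (Join l r) = 1 + bsize l + bsize r"

definition complexity :: "tree \<Rightarrow> nat" where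
  "complexity X = (case X of None \<Rightarrow> 0 | Some t \<Rightarrow> bsize t)"

definition num_leaves :: "tree \<Rightarrow> nat" where
  "num_leaves X = length (leaf_list X)"

definition valid_tree :: "nat \<Rightarrow> tree \<Rightarrow> bool" where
  "valid_tree n X \<longleftrightarrow> set (leaf_list X) \<subseteq> terminals n"

fun worder_scan :: "lit list \<Rightarrow> lit list \<Rightarrow> lit list" where
  "worder_scan S [] = S"
| "worder_scan S (x # xs) =
     (if x \<in> set S \<or> compl x \<in> set S then worder_scan S xs else worder_scan (S @ [x]) xs)"

definition worder_expressed :: "nat \<Rightarrow> tree \<Rightarrow> nat set" where
  "worder_expressed n X = {i \<in> {1..n}. Pos i \<in> set (worder_scan [] (leaf_list X))}"

definition wmajority_expressed :: "nat \<Rightarrow> tree \<Rightarrow> nat set" where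
  "wmajority_expressed n X = {i \<in> {1..n}. count_list (leaf_list X) (Pos i) \<ge> 1 \<and>
       count_list (leaf_list X) (Pos i) \<ge> count_list (leaf_list X) (Neg i)}"

datatype problem = WORDER | WMAJORITY

definition expressed :: "problem \<Rightarrow> nat \<Rightarrow> tree \<Rightarrow> nat set" where
  "expressed P n X = (case P of WORDER \<Rightarrow> worder_expressed n X | WMAJORITY \<Rightarrow> wmajority_expressed n X)"

definition fitness :: "problem \<Rightarrow> nat \<Rightarrow> (nat \<Rightarrow> real) \<Rightarrow> tree \<Rightarrow> real" where
  "fitness P n w X = (\<Sum>i \<in> expressed P n X. w i)"

definition non_redundant :: "problem \<Rightarrow> nat \<Rightarrow> tree \<Rightarrow> bool" where
  "non_redundant P n X \<longleftrightarrow> X = None \<or>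
     int (complexity X) = 2 * int (card (expressed P n X)) - 1"

inductive subst_b :: "nat \<Rightarrow> btree \<Rightarrow> btree \<Rightarrow> bool" for n where
  "u \<in> terminals n \<Longrightarrow> subst_b n (Leaf a) (Leaf u)"
| "subst_b n l l' \<Longrightarrow> subst_b n (Join l r) (Join l' r)"
| "subst_b n r r' \<Longrightarrow> subst_b n (Join l r) (Join l r')"

inductive insert_b :: "nat \<Rightarrow> btree \<Rightarrow> btree \<Rightarrow> bool" for n where
  "u \<in> terminals n \<Longrightarrow> insert_b n v (Join (Leaf u) v)"
| "u \<in> terminals n \<Longrightarrow> insert_b n v (Join v (Leaf u))"
| "insert_b n l l' \<Longrightarrow> insert_b n (Join l r) (Join l' r)"
| "insert_b n r r' \<Longrightarrow> insert_b n (Join l r) (Join l r')"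

inductive delete_b :: "btree \<Rightarrow> btree \<Rightarrow> bool" where
  "delete_b (Join (Leaf a) r) r"
| "delete_b (Join l (Leaf a)) l"
| "delete_b l l' \<Longrightarrow> delete_b (Join l r) (Join l' r)"
| "delete_b r r' \<Longrightarrow> delete_b (Join l r) (Join l r')"

text \<open>One HVL-Prime application: Y is a possible outcome of mutating X.
  Substitution/deletion on the empty tree (no leaf to choose) leave it unchanged.\<close>
inductive mutate1 :: "nat \<Rightarrow> tree \<Rightarrow> tree \<Rightarrow> bool" for n where
  subst: "subst_b n t t' \<Longrightarrow> mutate1 n (Some t) (Some t')"
| ins: "insert_b n t t' \<Longrightarrow> mutate1 n (Some t) (Some t')"
| ins_empty: "u \<in> terminals n \<Longrightarrow> mutate1 n None (Some (Leaf u))"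
| del: "delete_b t t' \<Longrightarrow> mutate1 n (Some t) (Some t')"
| del_single: "mutate1 n (Some (Leaf a)) None"
| noop_empty: "mutate1 n None None"

definition accept :: "problem \<Rightarrow> nat \<Rightarrow> (nat \<Rightarrow> real) \<Rightarrow> tree \<Rightarrow> tree \<Rightarrow> bool" where
  "accept P n w X Y \<longleftrightarrow> fitness P n w Y > fitness P n w X \<or>
     (fitness P n w Y = fitness P n w X \<and> complexity Y \<le> complexity X)"

definition gp_step :: "problem \<Rightarrow> nat \<Rightarrow> (nat \<Rightarrow> real) \<Rightarrow> tree \<Rightarrow> tree \<Rightarrow> bool" where
  "gp_step P n w X X' \<longleftrightarrow> (\<exists>Y. mutate1 n X Y \<and> X' = (if accept P n w X Y then Y else X))"

end

theory Submission
  imports Defs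
begin

text \<open>
  Both fitness functions are local in the variables: whether x_i is expressed
  depends only on the subsequence of leaf labels over variable i (for WORDER: whether its
  first element is x_i; for WMAJORITY: a count comparison).  A single HVL-Prime operation
  changes the leaf list by replacing, inserting or deleting one literal, so the expressed set
  changes only inside a window of at most two variables.  Comparing sums of positive weights
  and cardinalities inside such a window shows that an accepted mutation never lowers the
  fitness and never increases the redundancy s - k (number of leaves minus number of expressed
  variables): substitutions keep s and cannot lower k without lowering F, insertions are only
  accepted when F strictly grows (they increase the complexity), and deletions lose at most one
  expressed variable.  Since s - k \<ge> 0 always and non-redundancy means exactly s - k = 0, the
  theorem follows by monotonicity along the run.
\<close>

definition proj :: "nat \<Rightarrow> lit list \<Rightarrow> lit list" where
  "proj i l = filter (\<lambda>x. var x = i) l"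

fun expresses :: "problem \<Rightarrow> nat \<Rightarrow> lit list \<Rightarrow> bool" where
  "expresses WORDER i q \<longleftrightarrow> q \<noteq> [] \<and> hd q = Pos i"
| "expresses WMAJORITY i q \<longleftrightarrow>
     count_list q (Pos i) \<ge> 1 \<and> count_list q (Pos i) \<ge> count_list q (Neg i)"

definition expressed_in :: "problem \<Rightarrow> nat \<Rightarrow> lit list \<Rightarrow> nat set" where
  "expressed_in P n l = {i \<in> {1..n}. expresses P i (proj i l)}"

lemma var_eq_iff: "var y = var x \<longleftrightarrow> y = x \<or> y = compl x"
  by (cases x; cases y) auto

lemma worder_scan_skip_iff: "(x \<in> set S \<or> compl x \<in> set S) \<longleftrightarrow> var x \<in> var ` set S"
  by (auto simp: image_iff) (metis var_eq_iff)+

lemma worder_scan_Pos_iff: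
  "Pos i \<in> set (worder_scan S l) \<longleftrightarrow>
   (if i \<in> var ` set S then Pos i \<in> set S else proj i l \<noteq> [] \<and> hd (proj i l) = Pos i)"
proof (induction l arbitrary: S)
  case Nil
  then show ?case by (auto simp: proj_def image_iff)
next
  case (Cons x xs)
  show ?case
  proof (cases "var x \<in> var ` set S")
    case True
    then have "worder_scan S (x # xs) = worder_scan S xs"
      using worder_scan_skip_iff by simp
    then show ?thesis using Cons True by (auto simp: proj_def)
  next
    case False
    then have "worder_scan S (x # xs) = worder_scan (S @ [x]) xs"
      using worder_scan_skip_iff by auto
    then show ?thesis using Cons False by (cases x) (auto simp: proj_def image_iff)
  qed
qed

lemma count_list_proj: "var y = i \<Longrightarrow> count_list (proj i l) y = count_list l y"
  by (induction l) (auto simp: proj_def)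

lemma expressed_eq_expressed_in: "expressed P n X = expressed_in P n (leaf_list X)"
  by (cases P) (auto simp: expressed_def expressed_in_def worder_expressed_def
      wmajority_expressed_def worder_scan_Pos_iff count_list_proj)

lemma expressed_in_subset_Pos: "expressed_in P n l \<subseteq> {i. Pos i \<in> set l}"
proof
  fix i assume "i \<in> expressed_in P n l"
  then have e: "expresses P i (proj i l)" by (simp add: expressed_in_def)
  have "Pos i \<in> set (proj i l)"
  proof (cases P)
    case WORDER then show ?thesis using e by (cases "proj i l") auto
  next
    case WMAJORITY then show ?thesis using e
      by (metis expresses.simps(2) count_list_0_iff not_one_le_zero)
  qed
  then show "i \<in> {i. Pos i \<in> set l}" by (simp add: proj_def)
qed

lemma card_expressed_in_le_length: "card (expressed_in P n l) \<le> length l"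
proof -
  have fin: "finite {i. Pos i \<in> set l}"
    by (rule finite_imageD[of Pos]) (auto intro: finite_subset[of _ "set l"] simp: inj_on_def)
  have "card (expressed_in P n l) \<le> card {i. Pos i \<in> set l}"
    using card_mono[OF fin expressed_in_subset_Pos] .
  also have "\<dots> \<le> card (set l)"
    by (rule card_inj_on_le[of Pos]) (auto simp: inj_on_def)
  also have "\<dots> \<le> length l" by (rule card_length)
  finally show ?thesis .
qed

lemma expressed_in_local:
  assumes "\<And>i. i \<notin> W \<Longrightarrow> proj i l = proj i l'"
  shows "expressed_in P n l - W = expressed_in P n l' - W"
  using assms by (auto simp: expressed_in_def)

lemma sum_less_if_card_less_small:
  fixes w :: "'a \<Rightarrow> real"
  assumes "finite W" "card W \<le> 2" "X \<subseteq> W" "Y \<subseteq> W" "card Y < card X"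
    and pos: "\<forall>i\<in>X. 0 < w i"
  shows "sum w Y < sum w X"
proof (cases "Y = {}")
  case True
  then have "X \<noteq> {}" using assms(5) by auto
  then show ?thesis using True pos sum_pos[of X w] finite_subset[OF \<open>X \<subseteq> W\<close>] assms(1) by simp
next
  case False
  have finY: "finite Y" using assms(1,4) finite_subset by blast
  have finX: "finite X" using assms(1,3) finite_subset by blast
  have "card Y \<ge> 1" using finY False by (simp add: Suc_le_eq card_gt_0_iff)
  then have "card X = card W" using assms(2,5) card_mono[OF assms(1,3)] by linarith
  then have "X = W" using card_subset_eq[OF assms(1,3)] by simp
  have "Y \<subset> X" using \<open>X = W\<close> assms(4,5) by auto
  then obtain b where "b \<in> X - Y" by blast
  show ?thesis
    by (rule sum_strict_mono2[OF finX]) (use \<open>Y \<subset> X\<close> \<open>b \<in> X - Y\<close> pos in auto)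
qed

lemma card_le_if_sum_le_window:
  fixes w :: "'a \<Rightarrow> real"
  assumes fin: "finite A" "finite B" "finite W" "card W \<le> 2"
    and same: "A - W = B - W" and pos: "\<forall>i\<in>A. 0 < w i"
    and le: "sum w A \<le> sum w B"
  shows "card A \<le> card B"
proof -
  have "card (A \<inter> W) \<le> card (B \<inter> W)"
  proof (rule ccontr)
    assume "\<not> ?thesis"
    then have "sum w (B \<inter> W) < sum w (A \<inter> W)"
      using sum_less_if_card_less_small[OF fin(3,4)] pos by auto
    then have "sum w B < sum w A"
      using sum.Int_Diff[OF fin(1), of w W] sum.Int_Diff[OF fin(2), of w W] same by simp
    with le show False by simp
  qed
  then show ?thesis using card_Int_Diff[OF fin(1), of W] card_Int_Diff[OF fin(2), of W] same
    by simp
qed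

lemma card_Suc_if_sum_less_single:
  fixes w :: "'a \<Rightarrow> real"
  assumes fin: "finite A" and same: "A - {v} = B - {v}" and pos: "\<forall>i\<in>A \<union> B. 0 < w i"
    and less: "sum w A < sum w B"
  shows "card B = Suc (card A)"
proof -
  have "v \<notin> A"
  proof
    assume "v \<in> A"
    then have "B \<subseteq> A" using same by blast
    then have "sum w B \<le> sum w A"
      by (intro sum_mono2[OF fin]) (use pos in \<open>auto intro: less_imp_le\<close>)
    with less show False by simp
  qed
  moreover have "v \<in> B"
  proof (rule ccontr)
    assume "v \<notin> B"
    then have "A = B" using same \<open>v \<notin> A\<close> by blast
    with less show False by simp
  qed
  ultimately have "B = insert v A" using same by blast
  then show ?thesis using fin \<open>v \<notin> A\<close> by simp
qed

lemma card_le_Suc_if_single: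
  assumes fin: "finite A" "finite B" and same: "A - {v} = B - {v}"
  shows "card A \<le> Suc (card B)"
proof -
  have "card (A \<inter> {v}) \<le> 1" using card_mono[of "{v}" "A \<inter> {v}"] by simp
  moreover have "card (A - {v}) \<le> card B" using same card_Diff1_le[of B v] by simp
  ultimately show ?thesis using card_Int_Diff[OF fin(1), of "{v}"] by simp
qed

lemma subst_b_leaves:
  "subst_b n t t' \<Longrightarrow> \<exists>xs a b ys. leaves t = xs @ a # ys \<and> leaves t' = xs @ b # ys"
proof (induction rule: subst_b.induct)
  case (1 u a)
  show ?case by (intro exI[of _ "[]"] exI[of _ a] exI[of _ u]) simp
next
  case (2 l l' r)
  then obtain xs a b ys where "leaves l = xs @ a # ys" "leaves l' = xs @ b # ys" by blast
  then show ?case by (intro exI[of _ xs] exI[of _ a] exI[of _ b] exI[of _ "ys @ leaves r"]) simp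
next
  case (3 r r' l)
  then obtain xs a b ys where "leaves r = xs @ a # ys" "leaves r' = xs @ b # ys" by blast
  then show ?case by (intro exI[of _ "leaves l @ xs"] exI[of _ a] exI[of _ b] exI[of _ ys]) simp
qed

lemma insert_b_leaves:
  "insert_b n t t' \<Longrightarrow> \<exists>xs u ys. leaves t = xs @ ys \<and> leaves t' = xs @ u # ys"
proof (induction rule: insert_b.induct)
  case (1 u v)
  show ?case by (intro exI[of _ "[]"] exI[of _ u] exI[of _ "leaves v"]) simp
next
  case (2 u v)
  show ?case by (intro exI[of _ "leaves v"] exI[of _ u] exI[of _ "[]"]) simp
next
  case (3 l l' r)
  then obtain xs u ys where "leaves l = xs @ ys" "leaves l' = xs @ u # ys" by blast
  then show ?case by (intro exI[of _ xs] exI[of _ u] exI[of _ "ys @ leaves r"]) simp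
next
  case (4 r r' l)
  then obtain xs u ys where "leaves r = xs @ ys" "leaves r' = xs @ u # ys" by blast
  then show ?case by (intro exI[of _ "leaves l @ xs"] exI[of _ u] exI[of _ ys]) simp
qed

lemma delete_b_leaves:
  "delete_b t t' \<Longrightarrow> \<exists>xs a ys. leaves t = xs @ a # ys \<and> leaves t' = xs @ ys"
proof (induction rule: delete_b.induct)
  case (1 a r)
  show ?case by (intro exI[of _ "[]"] exI[of _ a] exI[of _ "leaves r"]) simp
next
  case (2 l a)
  show ?case by (intro exI[of _ "leaves l"] exI[of _ a] exI[of _ "[]"]) simp
next
  case (3 l l' r)
  then obtain xs a ys where "leaves l = xs @ a # ys" "leaves l' = xs @ ys" by blast
  then show ?case by (intro exI[of _ xs] exI[of _ a] exI[of _ "ys @ leaves r"]) simp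
next
  case (4 r r' l)
  then obtain xs a ys where "leaves r = xs @ a # ys" "leaves r' = xs @ ys" by blast
  then show ?case by (intro exI[of _ "leaves l @ xs"] exI[of _ a] exI[of _ ys]) simp
qed

lemma mutate1_leaf_list:
  assumes "mutate1 n X Y"
  obtains (substitute) xs a b ys where "leaf_list X = xs @ a # ys" "leaf_list Y = xs @ b # ys"
    | (insert) xs u ys where "leaf_list X = xs @ ys" "leaf_list Y = xs @ u # ys"
    | (delete) xs a ys where "leaf_list X = xs @ a # ys" "leaf_list Y = xs @ ys"
    | (unchanged) "leaf_list Y = leaf_list X"
  using assms
proof cases
  case (subst t t')
  then obtain xs a b ys where "leaves t = xs @ a # ys" "leaves t' = xs @ b # ys"
    using subst_b_leaves by blast
  then show ?thesis using subst that(1) by (simp add: leaf_list_def)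
next
  case (ins t t')
  then obtain xs u ys where "leaves t = xs @ ys" "leaves t' = xs @ u # ys"
    using insert_b_leaves by blast
  then show ?thesis using ins that(2) by (simp add: leaf_list_def)
next
  case (ins_empty u) then show ?thesis using that(2)[of "[]" "[]" u] by (simp add: leaf_list_def)
next
  case (del t t')
  then obtain xs a ys where "leaves t = xs @ a # ys" "leaves t' = xs @ ys"
    using delete_b_leaves by blast
  then show ?thesis using del that(3) by (simp add: leaf_list_def)
next
  case (del_single a) then show ?thesis using that(3)[of "[]" a "[]"] by (simp add: leaf_list_def)
next
  case noop_empty then show ?thesis using that(4) by simp
qed

definition redundancy :: "problem \<Rightarrow> nat \<Rightarrow> tree \<Rightarrow> int" where
  "redundancy P n X = int (num_leaves X) - int (card (expressed P n X))"

lemma redundancy_nonneg: "redundancy P n X \<ge> 0"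
  using card_expressed_in_le_length[of P n "leaf_list X"]
  by (simp add: redundancy_def num_leaves_def expressed_eq_expressed_in)

text \<open>A tree with s leaves has 2s - 1 nodes, so non-redundancy means exactly s = k.\<close>
lemma bsize_leaves: "bsize t = 2 * length (leaves t) - 1 \<and> length (leaves t) \<ge> 1"
  by (induction t) auto

lemma complexity_num_leaves: "complexity X = 2 * num_leaves X - 1"
  using bsize_leaves by (cases X) (auto simp: complexity_def num_leaves_def leaf_list_def)

lemma non_redundant_iff: "non_redundant P n X \<longleftrightarrow> redundancy P n X = 0"
proof (cases X)
  case None
  then show ?thesis using redundancy_nonneg[of P n X]
    by (simp add: non_redundant_def redundancy_def num_leaves_def leaf_list_def)
next
  case (Some t)
  then have "num_leaves X \<ge> 1" using bsize_leaves by (simp add: num_leaves_def leaf_list_def)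
  then show ?thesis using Some complexity_num_leaves[of X]
    by (auto simp: non_redundant_def redundancy_def)
qed

lemma accepted_mutation_redundancy:
  assumes pos: "\<forall>i\<in>{1..n}. 0 < w i" and mut: "mutate1 n X Y" and acc: "accept P n w X Y"
  shows "redundancy P n Y \<le> redundancy P n X"
proof -
  define A where "A = expressed_in P n (leaf_list X)"
  define B where "B = expressed_in P n (leaf_list Y)"
  have fit: "fitness P n w X = sum w A" "fitness P n w Y = sum w B"
    by (simp_all add: fitness_def expressed_eq_expressed_in A_def B_def)
  have red: "redundancy P n X = int (length (leaf_list X)) - int (card A)"
    "redundancy P n Y = int (length (leaf_list Y)) - int (card B)"
    by (simp_all add: redundancy_def num_leaves_def expressed_eq_expressed_in A_def B_def)
  have fin: "finite A" "finite B" by (simp_all add: A_def B_def expressed_in_def)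
  have posAB: "\<forall>i\<in>A \<union> B. 0 < w i" using pos by (auto simp: A_def B_def expressed_in_def)
  have acc': "sum w A < sum w B \<or> sum w A = sum w B \<and> complexity Y \<le> complexity X"
    using acc fit by (auto simp: accept_def)
  from mut show ?thesis
  proof (cases rule: mutate1_leaf_list)
    case (substitute xs a b ys)
    have "A - {var a, var b} = B - {var a, var b}"
      unfolding A_def B_def by (rule expressed_in_local) (auto simp: substitute proj_def)
    moreover have "card {var a, var b} \<le> 2" by (cases "var a = var b") auto
    ultimately have "card A \<le> card B"
      using card_le_if_sum_le_window[OF fin, of "{var a, var b}" w] posAB acc' by auto
    then show ?thesis by (simp add: red substitute)
  next
    case (insert xs u ys)
    have "complexity X < complexity Y"
      by (simp add: complexity_num_leaves num_leaves_def insert)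
    then have "sum w A < sum w B" using acc' by auto
    moreover have "A - {var u} = B - {var u}"
      unfolding A_def B_def by (rule expressed_in_local) (auto simp: insert proj_def)
    ultimately have "card B = Suc (card A)"
      using card_Suc_if_sum_less_single[OF fin(1)] posAB by blast
    then show ?thesis by (simp add: red insert)
  next
    case (delete xs a ys)
    have "A - {var a} = B - {var a}"
      unfolding A_def B_def by (rule expressed_in_local) (auto simp: delete proj_def)
    then have "card A \<le> Suc (card B)" using card_le_Suc_if_single[OF fin] by blast
    then show ?thesis by (simp add: red delete)
  next
    case unchanged
    then show ?thesis by (simp add: A_def B_def red)
  qed
qed

lemma gp_step_monotone:
  assumes pos: "\<forall>i\<in>{1..n}. 0 < w i" and step: "gp_step P n w X X'"
  shows "fitness P n w X \<le> fitness P n w X' \<and> redundancy P n X' \<le> redundancy P n X"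
proof -
  obtain Y where mut: "mutate1 n X Y" and X': "X' = (if accept P n w X Y then Y else X)"
    using step by (auto simp: gp_step_def)
  show ?thesis
  proof (cases "accept P n w X Y")
    case True
    then show ?thesis using X' accepted_mutation_redundancy[OF pos mut] by (auto simp: accept_def)
  qed (use X' in simp)
qed

theorem mainTheorem4:
  fixes P :: problem and n :: nat and w :: "nat \<Rightarrow> real" and run :: "nat \<Rightarrow> tree"
  assumes "n \<ge> 1"
    and "\<forall>i \<in> {1..n}. w i > 0"
    and "\<forall>i j. 1 \<le> i \<longrightarrow> i \<le> j \<longrightarrow> j \<le> n \<longrightarrow> w j \<le> w i"
    and "valid_tree n (run 0)"
    and "\<forall>t. gp_step P n w (run t) (run (Suc t))"
  shows "(\<forall>t. fitness P n w (run t) \<le> fitness P n w (run (Suc t))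
             \<and> int (num_leaves (run (Suc t))) - int (card (expressed P n (run (Suc t))))
                 \<le> int (num_leaves (run t)) - int (card (expressed P n (run t)))) \<and>
         (\<forall>t t'. t \<le> t' \<longrightarrow> non_redundant P n (run t) \<longrightarrow> non_redundant P n (run t'))"
proof -
  have steps: "fitness P n w (run t) \<le> fitness P n w (run (Suc t))
      \<and> redundancy P n (run (Suc t)) \<le> redundancy P n (run t)" for t
    using gp_step_monotone assms(2,5) by blast
  then have "decseq (\<lambda>t. redundancy P n (run t))" by (simp add: decseq_SucI)
  then have "non_redundant P n (run t')"
    if "t \<le> t'" "non_redundant P n (run t)" for t t'
    using that decseqD redundancy_nonneg[of P n "run t'"]
    by (fastforce simp: non_redundant_iff)
  then show ?thesis using steps by (simp add: redundancy_def)
qed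

end
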